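(* In the standing setting of the context, for all $r,t>0$ and all $x\in M$, $$\mathbb{P}^x\big(d(X_t,x)\le r\big)\asymp1\wedge\frac{V(r)}{V(\phi^{-1}(t))},$$ with comparison constants independent of $x,r,t$.
   Context: Standing setting: $(M,d)$ is a locally compact separable metric space, $\mu$ a positive Radon measure on $M$ with full support, $(\mathcal{E},\mathcal{F})$ a regular Dirichlet form on $L^2(M;\mu)$ (no killing part), and $X=(\{X_t\},\{\mathbb P^x\})$ the associated $\mu$-symmetric Hunt process. $V,\phi$ are increasing functions on $(0,\infty)$, $\phi^{-1}$ the inverse of $\phi$, with constants $c_i,d_i>0$ ($i=1,\dots,4$) such that $c_1(R/r)^{d_1}\le V(R)/V(r)\le c_2(R/r)^{d_2}$ and $c_3(R/r)^{d_3}\le\phi(R)/\phi(r)\le c_4(R/r)^{d_4}$ for all $0<r<R<\infty$. $X$ has a symmetric heat kernel $p(t,x,y)$ defined for all $x,y\in M$, $t>0$, with $p(t,x,y)\asymp\frac{1}{V(\phi^{-1}(t))}\wedge\frac{t}{V(d(x,y))\phi(d(x,y))}$ for all $x,y,t$. $f\asymp g$ means $c^{-1}f\le g\le cf$ with $c\ge1$ independent of the variables. *)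

theory Defs
  imports "HOL-Probability.Probability"
begin

definition inv_pos :: "(real \<Rightarrow> real) \<Rightarrow> real \<Rightarrow> real" where
  "inv_pos \<phi> t = inv_into {0<..} \<phi> t"

text \<open>Two-sided heat kernel scale
  1/V(phi^{-1}(t)) min t/(V(d)phi(d)); for d = 0 the second term is +infinity.\<close>
definition hk_scale :: "(real \<Rightarrow> real) \<Rightarrow> (real \<Rightarrow> real) \<Rightarrow> real \<Rightarrow> real \<Rightarrow> real" where
  "hk_scale V \<phi> t \<rho> =
     (if \<rho> = 0 then 1 / V (inv_pos \<phi> t)
      else min (1 / V (inv_pos \<phi> t)) (t / (V \<rho> * \<phi> \<rho>)))"

definition power_growth :: "(real \<Rightarrow> real) \<Rightarrow> real \<Rightarrow> real \<Rightarrow> real \<Rightarrow> real \<Rightarrow> bool" where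
  "power_growth f c1 c2 d1 d2 \<longleftrightarrow>
     (\<forall>r R. 0 < r \<longrightarrow> r < R \<longrightarrow>
        c1 * (R / r) powr d1 \<le> f R / f r \<and> f R / f r \<le> c2 * (R / r) powr d2)"

end

theory Submission
  imports Defs
begin

text \<open>The upper bound follows from \<open>p(t,x,\<cdot>) \<le> c/V(\<phi>\<inverse>(t))\<close> and the volume bound
  \<open>\<mu>(B(x,r)) \<le> c V(r)\<close>; the latter holds because \<open>p(\<phi>(r),x,\<cdot>) \<ge> 1/(c V(r))\<close> on \<open>B(x,r)\<close>
  while its total mass is at most 1. For the lower bound, \<open>p(t,x,\<cdot>) \<ge> 1/(c V(\<phi>\<inverse>(t)))\<close> on
  \<open>B(x, r \<and> \<phi>\<inverse>(t))\<close>, so it remains to show \<open>\<mu>(B(x,\<rho>)) \<ge> a V(\<rho>)\<close>. Since \<open>X\<close> may be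
  killed, only \<open>\<integral>p \<le> 1\<close> is available, and mass is recovered through the semigroup property:
  \<open>p(2t,x,x) = \<integral> p(t,x,z)\<^sup>2 \<mu>(dz)\<close> is at least a multiple of \<open>1/V(\<phi>\<inverse>(t))\<close>, whereas by the
  off-diagonal bound and the growth of \<open>V\<close> the part of this integral outside \<open>B(x, K \<phi>\<inverse>(t))\<close>
  is at most half of that for a large \<open>K\<close>. Hence \<open>\<mu>(B(x, K \<phi>\<inverse>(t)))\<close> is comparable to
  \<open>V(\<phi>\<inverse>(t))\<close>, and the upper growth bound of \<open>V\<close> removes the factor \<open>K\<close>.\<close>

lemma power_growth_lower:
  assumes "power_growth f c1 c2 d1 d2" "0 < r" "r < R" "0 < f r"
  shows "c1 * (R / r) powr d1 * f r \<le> f R"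
  using assms unfolding power_growth_def by (auto simp: field_simps)

lemma power_growth_upper:
  assumes "power_growth f c1 c2 d1 d2" "0 < r" "r < R" "0 < f r"
  shows "f R \<le> c2 * (R / r) powr d2 * f r"
  using assms unfolding power_growth_def by (auto simp: field_simps)

lemma set_integral_ge_const:
  fixes f :: "'a \<Rightarrow> real"
  assumes A: "A \<in> sets M" and f: "set_integrable M A f"
    and a: "0 < a" and lower: "\<And>x. x \<in> A \<Longrightarrow> a \<le> f x"
  shows "emeasure M A < \<infinity>" and "a * measure M A \<le> (\<integral>x\<in>A. f x \<partial>M)"
proof -
  have const: "set_integrable M A (\<lambda>_. a)"
  proof (rule set_integrable_bound[OF f])
    show "AE x in M. x \<in> A \<longrightarrow> norm a \<le> norm (f x)"
      using a lower by (auto intro!: AE_I2 intro: order.trans[OF _ abs_ge_self])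
  qed (use A in \<open>simp add: set_borel_measurable_def borel_measurable_indicator\<close>)
  then show fin: "emeasure M A < \<infinity>"
    using A a by (simp add: set_integrable_def integrable_indicator_iff sets.Int_space_eq2)
  have "a * measure M A = (\<integral>x\<in>A. a \<partial>M)"
    using A fin by (simp add: set_integral_const)
  also have "\<dots> \<le> (\<integral>x\<in>A. f x \<partial>M)"
    by (rule set_integral_mono[OF const f lower])
  finally show "a * measure M A \<le> (\<integral>x\<in>A. f x \<partial>M)" .
qed

lemma set_integral_le_const:
  fixes f :: "'a \<Rightarrow> real"
  assumes "A \<in> sets M" "emeasure M A < \<infinity>" "set_integrable M A f"
    and upper: "\<And>x. x \<in> A \<Longrightarrow> f x \<le> b"
  shows "(\<integral>x\<in>A. f x \<partial>M) \<le> b * measure M A"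
proof -
  have const: "set_integrable M A (\<lambda>_. b)"
    using assms(1,2) by (simp add: set_integrable_def integrable_indicator_iff sets.Int_space_eq2)
  have "(\<integral>x\<in>A. f x \<partial>M) \<le> (\<integral>x\<in>A. b \<partial>M)"
    by (rule set_integral_mono[OF assms(3) const upper])
  also have "\<dots> = b * measure M A"
    using assms(1,2) by (simp add: set_integral_const)
  finally show ?thesis .
qed

lemma set_integral_mono_set_nonneg:
  fixes f :: "'a \<Rightarrow> real"
  assumes "set_integrable M B f" "A \<in> sets M" "A \<subseteq> B" "\<And>x. x \<in> B \<Longrightarrow> 0 \<le> f x"
  shows "(\<integral>x\<in>A. f x \<partial>M) \<le> (\<integral>x\<in>B. f x \<partial>M)"
proof -
  have "set_integrable M A f"
    by (rule set_integrable_subset[OF assms(1-3)])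
  then show ?thesis
    using assms unfolding set_integrable_def set_lebesgue_integral_def
    by (intro integral_mono) (auto simp: indicator_def)
qed

locale scale_functions =
  fixes V \<phi> :: "real \<Rightarrow> real"
  assumes V_pos: "\<And>r. 0 < r \<Longrightarrow> 0 < V r"
    and V_mono: "mono_on {0<..} V"
    and phi_mono: "strict_mono_on {0<..} \<phi>"
    and phi_onto: "\<phi> ` {0<..} = {0<..}"
begin

lemma phi_pos: "0 < s \<Longrightarrow> 0 < \<phi> s"
  using phi_onto by auto

lemma V_le: "0 < r \<Longrightarrow> r \<le> R \<Longrightarrow> V r \<le> V R"
  using mono_onD[OF V_mono] by simp

lemma phi_le: "0 < r \<Longrightarrow> r \<le> R \<Longrightarrow> \<phi> r \<le> \<phi> R"
  using strict_mono_on_leD[OF phi_mono] by simp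

lemma
  assumes "0 < t"
  shows inv_pos_pos: "0 < inv_pos \<phi> t" and phi_inv_pos: "\<phi> (inv_pos \<phi> t) = t"
proof -
  have "t \<in> \<phi> ` {0<..}" using phi_onto assms by simp
  then show "0 < inv_pos \<phi> t" "\<phi> (inv_pos \<phi> t) = t"
    unfolding inv_pos_def using inv_into_into[of t \<phi> "{0<..}"] f_inv_into_f[of t \<phi> "{0<..}"] by auto
qed

lemma inv_pos_phi: "0 < s \<Longrightarrow> inv_pos \<phi> (\<phi> s) = s"
  unfolding inv_pos_def using inv_into_f_f[OF strict_mono_on_imp_inj_on[OF phi_mono]] by simp

lemma hk_scale_pos:
  assumes "0 < t" "0 \<le> \<rho>"
  shows "0 < hk_scale V \<phi> t \<rho>"
  using assms V_pos[OF inv_pos_pos[OF assms(1)]] V_pos[of \<rho>] phi_pos[of \<rho>]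
  by (auto simp: hk_scale_def)

lemma hk_scale_near_diag:
  assumes t: "0 < t" and \<rho>: "0 \<le> \<rho>" "\<rho> \<le> inv_pos \<phi> t"
  shows "hk_scale V \<phi> t \<rho> = 1 / V (inv_pos \<phi> t)"
proof (cases "\<rho> = 0")
  case False
  with \<rho> have "0 < \<rho>" by simp
  have "V \<rho> * \<phi> \<rho> \<le> V (inv_pos \<phi> t) * t"
    using V_le[OF \<open>0 < \<rho>\<close> \<rho>(2)] phi_le[OF \<open>0 < \<rho>\<close> \<rho>(2)] phi_inv_pos[OF t]
      V_pos[OF \<open>0 < \<rho>\<close>] phi_pos[OF \<open>0 < \<rho>\<close>]
    by (intro mult_mono) auto
  then have "1 / V (inv_pos \<phi> t) \<le> t / (V \<rho> * \<phi> \<rho>)"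
    using V_pos[OF inv_pos_pos[OF t]] V_pos[OF \<open>0 < \<rho>\<close>] phi_pos[OF \<open>0 < \<rho>\<close>] t
    by (simp add: field_simps)
  then show ?thesis using False by (simp add: hk_scale_def)
qed (simp add: hk_scale_def)

lemma hk_scale_off_diag:
  assumes t: "0 < t" and \<rho>: "inv_pos \<phi> t \<le> \<rho>"
  shows "hk_scale V \<phi> t \<rho> \<le> 1 / V \<rho>"
proof -
  have "0 < \<rho>" using inv_pos_pos[OF t] \<rho> by simp
  have "t \<le> \<phi> \<rho>"
    using phi_le[OF inv_pos_pos[OF t] \<rho>] phi_inv_pos[OF t] by simp
  then have "t / (V \<rho> * \<phi> \<rho>) \<le> 1 / V \<rho>"
    using V_pos[OF \<open>0 < \<rho>\<close>] phi_pos[OF \<open>0 < \<rho>\<close>] by (simp add: field_simps)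
  then show ?thesis using \<open>0 < \<rho>\<close> by (simp add: hk_scale_def)
qed

end

locale scale_functions_growth = scale_functions +
  fixes c1 c2 d1 d2 c3 c4 d3 d4 :: real
  assumes V_growth: "power_growth V c1 c2 d1 d2"
    and phi_growth: "power_growth \<phi> c3 c4 d3 d4"
    and growth_constants_pos: "0 < c1" "0 < c3" "0 < d1" "0 < d2" "0 < d3"
begin

lemma c2_pos: "0 < c2"
proof -
  have "0 < V 2" "0 < V 1" using V_pos by auto
  then have "0 < c2 * (2 / 1) powr d2 * V 1"
    using power_growth_upper[OF V_growth, of 1 2] by linarith
  with \<open>0 < V 1\<close> show ?thesis by (simp add: zero_less_mult_iff)
qed

lemma V_dilate_le:
  assumes "1 \<le> K" "0 < s"
  shows "V (K * s) \<le> max 1 (c2 * K powr d2) * V s"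
proof (cases "K = 1")
  case False
  with assms have "s < K * s" by simp
  have "V (K * s) \<le> c2 * (K * s / s) powr d2 * V s"
    by (rule power_growth_upper[OF V_growth \<open>0 < s\<close> \<open>s < K * s\<close> V_pos[OF \<open>0 < s\<close>]])
  also have "\<dots> \<le> max 1 (c2 * K powr d2) * V s"
    using \<open>0 < s\<close> V_pos[OF \<open>0 < s\<close>] by (intro mult_right_mono) auto
  finally show ?thesis .
qed (use V_pos[OF \<open>0 < s\<close>] in simp)

lemma V_dilate_ge: "\<exists>K\<ge>1. \<forall>s>0. A * V s \<le> V (K * s)"
proof -
  define K where "K = max 2 ((A / c1) powr (1 / d1))"
  have "A \<le> c1 * K powr d1"
  proof (cases "0 < A")
    case True
    have "A / c1 = ((A / c1) powr (1 / d1)) powr d1"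
      using True growth_constants_pos by (simp add: powr_powr)
    also have "\<dots> \<le> K powr d1"
      using growth_constants_pos unfolding K_def by (intro powr_mono2) auto
    finally show ?thesis using growth_constants_pos by (simp add: field_simps)
  next
    case False
    moreover have "0 \<le> c1 * K powr d1" using growth_constants_pos by simp
    ultimately show ?thesis by linarith
  qed
  have "A * V s \<le> V (K * s)" if "0 < s" for s
  proof -
    have "s < K * s" using that unfolding K_def by simp
    have "A * V s \<le> c1 * (K * s / s) powr d1 * V s"
      using \<open>A \<le> c1 * K powr d1\<close> that V_pos[OF that] by (intro mult_right_mono) auto
    also have "\<dots> \<le> V (K * s)"
      by (rule power_growth_lower[OF V_growth that \<open>s < K * s\<close> V_pos[OF that]])
    finally show ?thesis .
  qed
  then show ?thesis by (intro exI[of _ K]) (auto simp: K_def)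
qed

lemma V_inv_pos_double: "\<exists>B\<ge>1. \<forall>t>0. V (inv_pos \<phi> (2 * t)) \<le> B * V (inv_pos \<phi> t)"
proof (intro exI[of _ "max 1 (c2 * (2 / c3) powr (d2 / d3))"] conjI allI impI)
  fix t :: real
  assume "0 < t"
  define s R where "s = inv_pos \<phi> t" and "R = inv_pos \<phi> (2 * t)"
  have s: "0 < s" "0 < V s" "\<phi> s = t"
    using inv_pos_pos phi_inv_pos V_pos \<open>0 < t\<close> unfolding s_def by auto
  have R: "0 < R" "\<phi> R = 2 * t"
    using inv_pos_pos phi_inv_pos \<open>0 < t\<close> unfolding R_def by auto
  have "V R \<le> c2 * (2 / c3) powr (d2 / d3) * V s" if "s < R"
  proof -
    have "c3 * (R / s) powr d3 \<le> 2"
      using power_growth_lower[OF phi_growth s(1) that] s R phi_pos \<open>0 < t\<close> by simp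
    then have ratio: "(R / s) powr d3 \<le> 2 / c3"
      using \<open>0 < t\<close> growth_constants_pos by (simp add: field_simps)
    have "V R \<le> c2 * (R / s) powr d2 * V s"
      by (rule power_growth_upper[OF V_growth s(1) that s(2)])
    also have "(R / s) powr d2 = ((R / s) powr d3) powr (d2 / d3)"
      using growth_constants_pos by (simp add: powr_powr)
    also have "\<dots> \<le> (2 / c3) powr (d2 / d3)"
      using ratio growth_constants_pos by (intro powr_mono2) auto
    finally show ?thesis
      using c2_pos s(2) by (simp add: mult_right_mono)
  qed
  moreover have "V R \<le> V s" if "R \<le> s"
    using V_le[OF R(1) that] .
  moreover have "V s \<le> max 1 (c2 * (2 / c3) powr (d2 / d3)) * V s"
    and "c2 * (2 / c3) powr (d2 / d3) * V s \<le> max 1 (c2 * (2 / c3) powr (d2 / d3)) * V s"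
    using s(2) by (auto intro: mult_right_mono)
  ultimately show "V R \<le> max 1 (c2 * (2 / c3) powr (d2 / d3)) * V s"
    by fastforce
qed simp

end

locale heat_kernel = scale_functions +
  fixes \<mu> :: "'a::metric_space measure" and p :: "real \<Rightarrow> 'a \<Rightarrow> 'a \<Rightarrow> real" and c :: real
  assumes sets_\<mu>: "sets \<mu> = sets borel"
    and c_ge_1: "1 \<le> c"
    and p_lower: "\<And>t x y. 0 < t \<Longrightarrow> hk_scale V \<phi> t (dist x y) / c \<le> p t x y"
    and p_upper: "\<And>t x y. 0 < t \<Longrightarrow> p t x y \<le> c * hk_scale V \<phi> t (dist x y)"
    and p_integrable: "\<And>t x. 0 < t \<Longrightarrow> integrable \<mu> (p t x)"
    and p_integral_le_1: "\<And>t x. 0 < t \<Longrightarrow> (\<integral>y. p t x y \<partial>\<mu>) \<le> 1"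
    \<comment> \<open>only sub-Markovian: the process may have finite lifetime\<close>
begin

lemma sets_cball [measurable]: "cball x r \<in> sets \<mu>"
  using sets_\<mu> by simp

lemma p_nonneg:
  assumes "0 < t"
  shows "0 \<le> p t x y"
proof -
  have "0 < hk_scale V \<phi> t (dist x y) / c"
    using hk_scale_pos[OF assms] c_ge_1 by simp
  then show ?thesis using p_lower[OF assms, of x y] by linarith
qed

lemma p_le_diag:
  assumes "0 < t"
  shows "p t x y \<le> c / V (inv_pos \<phi> t)"
proof -
  have "p t x y \<le> c * hk_scale V \<phi> t (dist x y)" using p_upper[OF assms] .
  also have "\<dots> \<le> c * (1 / V (inv_pos \<phi> t))"
    using c_ge_1 by (intro mult_left_mono) (auto simp: hk_scale_def)
  finally show ?thesis by simp
qed

lemma p_ge_near_diag: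
  assumes "0 < t" "dist x y \<le> inv_pos \<phi> t"
  shows "1 / (c * V (inv_pos \<phi> t)) \<le> p t x y"
  using p_lower[OF assms(1), of x y] hk_scale_near_diag[OF assms(1) _ assms(2)]
  by (simp add: mult.commute)

lemma p_le_off_diag:
  assumes "0 < t" "inv_pos \<phi> t \<le> dist x y"
  shows "p t x y \<le> c / V (dist x y)"
proof -
  have "p t x y \<le> c * hk_scale V \<phi> t (dist x y)" using p_upper[OF assms(1)] .
  also have "\<dots> \<le> c * (1 / V (dist x y))"
    using hk_scale_off_diag[OF assms] c_ge_1 by (intro mult_left_mono) auto
  finally show ?thesis by simp
qed

lemma set_integrable_p: "0 < t \<Longrightarrow> A \<in> sets \<mu> \<Longrightarrow> set_integrable \<mu> A (p t x)"
  unfolding set_integrable_def by (rule integrable_mult_indicator) (auto intro: p_integrable)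

lemma set_integral_p_le_1:
  assumes "0 < t" "A \<in> sets \<mu>"
  shows "(\<integral>y\<in>A. p t x y \<partial>\<mu>) \<le> 1"
proof -
  have "(\<integral>y\<in>A. p t x y \<partial>\<mu>) \<le> (\<integral>y. p t x y \<partial>\<mu>)"
    using set_integrable_p[OF assms] p_integrable[OF assms(1)] p_nonneg[OF assms(1)]
    unfolding set_integrable_def set_lebesgue_integral_def
    by (intro integral_mono) (auto simp: indicator_def)
  then show ?thesis using p_integral_le_1[OF assms(1), of x] by linarith
qed

lemma
  assumes "0 < \<rho>"
  shows emeasure_cball_finite: "emeasure \<mu> (cball x \<rho>) < \<infinity>"
    and measure_cball_le: "measure \<mu> (cball x \<rho>) \<le> c * V \<rho>"
proof -
  have t: "0 < \<phi> \<rho>" "inv_pos \<phi> (\<phi> \<rho>) = \<rho>"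
    using phi_pos inv_pos_phi assms by auto
  have lower: "1 / (c * V \<rho>) \<le> p (\<phi> \<rho>) x y" if "y \<in> cball x \<rho>" for y
    using p_ge_near_diag[OF t(1), of x y] that t by simp
  have "0 < 1 / (c * V \<rho>)" using c_ge_1 V_pos[OF assms] by simp
  note bound = set_integral_ge_const[OF sets_cball set_integrable_p[OF t(1) sets_cball] this]
  show "emeasure \<mu> (cball x \<rho>) < \<infinity>"
    using bound(1) lower by blast
  have "1 / (c * V \<rho>) * measure \<mu> (cball x \<rho>) \<le> (\<integral>y\<in>cball x \<rho>. p (\<phi> \<rho>) x y \<partial>\<mu>)"
    using bound(2) lower by blast
  then have "1 / (c * V \<rho>) * measure \<mu> (cball x \<rho>) \<le> 1"
    using set_integral_p_le_1[OF t(1) sets_cball] by (meson order.trans)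
  then show "measure \<mu> (cball x \<rho>) \<le> c * V \<rho>"
    using c_ge_1 V_pos[OF assms] by (simp add: field_simps)
qed

lemma cball_integral_le:
  assumes "0 < r" "0 < t"
  shows "(\<integral>y\<in>cball x r. p t x y \<partial>\<mu>) \<le> c\<^sup>2 * min 1 (V r / V (inv_pos \<phi> t))"
proof -
  have Vt: "0 < V (inv_pos \<phi> t)" using V_pos inv_pos_pos assms(2) by simp
  have "(\<integral>y\<in>cball x r. p t x y \<partial>\<mu>) \<le> c / V (inv_pos \<phi> t) * measure \<mu> (cball x r)"
    using set_integral_le_const[OF sets_cball emeasure_cball_finite[OF assms(1)]
        set_integrable_p[OF assms(2) sets_cball] p_le_diag[OF assms(2)]] .
  also have "\<dots> \<le> c / V (inv_pos \<phi> t) * (c * V r)"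
    using measure_cball_le[OF assms(1)] c_ge_1 Vt by (intro mult_left_mono) auto
  also have "\<dots> = c\<^sup>2 * (V r / V (inv_pos \<phi> t))"
    by (simp add: power2_eq_square)
  finally have "(\<integral>y\<in>cball x r. p t x y \<partial>\<mu>) \<le> c\<^sup>2 * (V r / V (inv_pos \<phi> t))" .
  moreover have "(\<integral>y\<in>cball x r. p t x y \<partial>\<mu>) \<le> c\<^sup>2 * 1"
    using set_integral_p_le_1[OF assms(2) sets_cball[of x r], of x] one_le_power[OF c_ge_1, of 2]
    by linarith
  ultimately show ?thesis by (simp add: min_def)
qed

lemma cball_integral_ge:
  assumes volume: "\<And>\<rho>. 0 < \<rho> \<Longrightarrow> a * V \<rho> \<le> measure \<mu> (cball x \<rho>)"
    and "0 < r" "0 < t"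
  shows "a / c * min 1 (V r / V (inv_pos \<phi> t)) \<le> (\<integral>y\<in>cball x r. p t x y \<partial>\<mu>)"
proof -
  define m where "m = min r (inv_pos \<phi> t)"
  have m: "0 < m" "m \<le> r" "m \<le> inv_pos \<phi> t"
    using assms inv_pos_pos unfolding m_def by auto
  have Vt: "0 < V (inv_pos \<phi> t)" using V_pos inv_pos_pos assms(3) by simp
  have "min 1 (V r / V (inv_pos \<phi> t)) = V m / V (inv_pos \<phi> t)"
  proof (cases "r \<le> inv_pos \<phi> t")
    case True
    then show ?thesis using V_le[OF \<open>0 < r\<close> True] Vt unfolding m_def by simp
  next
    case False
    then show ?thesis using V_le[OF inv_pos_pos[OF \<open>0 < t\<close>], of r] Vt unfolding m_def by simp
  qed
  then have "a / c * min 1 (V r / V (inv_pos \<phi> t)) = 1 / (c * V (inv_pos \<phi> t)) * (a * V m)"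
    by simp
  also have "\<dots> \<le> 1 / (c * V (inv_pos \<phi> t)) * measure \<mu> (cball x m)"
    using volume[OF m(1)] c_ge_1 Vt by (intro mult_left_mono) auto
  also have "\<dots> \<le> (\<integral>y\<in>cball x m. p t x y \<partial>\<mu>)"
    using m(3) c_ge_1 Vt
    by (intro set_integral_ge_const(2)[OF sets_cball set_integrable_p[OF assms(3) sets_cball]]
        p_ge_near_diag[OF assms(3)]) auto
  also have "\<dots> \<le> (\<integral>y\<in>cball x r. p t x y \<partial>\<mu>)"
    using m(2) p_nonneg[OF assms(3)]
    by (intro set_integral_mono_set_nonneg[OF set_integrable_p[OF assms(3) sets_cball]]) auto
  finally show ?thesis .
qed

lemma integral_p_sq_le:
  assumes "0 < s" "1 \<le> K"
  shows "(\<integral>z. (p (\<phi> s) x z)\<^sup>2 \<partial>\<mu>) \<le> (c / V s)\<^sup>2 * measure \<mu> (cball x (K * s)) + c / V (K * s)"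
proof -
  define t where "t = \<phi> s"
  have t: "0 < t" "inv_pos \<phi> t = s"
    using phi_pos inv_pos_phi assms unfolding t_def by auto
  have Ks: "0 < K * s" "s \<le> K * s" using assms by auto
  have "(p t x z)\<^sup>2 \<le> (c / V s)\<^sup>2 * indicator (cball x (K * s)) z + c / V (K * s) * p t x z" for z
  proof (cases "z \<in> cball x (K * s)")
    case True
    have "(p t x z)\<^sup>2 \<le> (c / V s)\<^sup>2"
      using p_le_diag[OF t(1)] p_nonneg[OF t(1)] t(2) by (intro power_mono) auto
    moreover have "0 \<le> c / V (K * s) * p t x z"
      using p_nonneg[OF t(1)] c_ge_1 V_pos[OF Ks(1)] by simp
    ultimately show ?thesis using True by simp
  next
    case False
    then have far: "K * s < dist x z" by simp
    then have "0 < dist x z" using Ks(1) by linarith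
    have "p t x z \<le> c / V (dist x z)"
      using p_le_off_diag[OF t(1)] t(2) far Ks by simp
    also have "\<dots> \<le> c / V (K * s)"
      using V_le[OF Ks(1)] far V_pos[OF Ks(1)] V_pos[OF \<open>0 < dist x z\<close>] c_ge_1
      by (intro divide_left_mono) auto
    finally have "p t x z * p t x z \<le> c / V (K * s) * p t x z"
      using p_nonneg[OF t(1)] by (intro mult_right_mono) auto
    then show ?thesis using False by (simp add: power2_eq_square)
  qed
  note pointwise = this
  have rhs_integrable: "integrable \<mu> (\<lambda>z. (c / V s)\<^sup>2 * indicator (cball x (K * s)) z + c / V (K * s) * p t x z)"
    using emeasure_cball_finite[OF Ks(1)] p_integrable[OF t(1)]
    by (auto simp: integrable_indicator_iff sets.Int_space_eq2)
  have "0 \<le> (c / V s)\<^sup>2 * measure \<mu> (cball x (K * s)) + c / V (K * s)"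
    using c_ge_1 V_pos[OF Ks(1)] by simp
  moreover have "(\<integral>z. (p t x z)\<^sup>2 \<partial>\<mu>) \<le> (c / V s)\<^sup>2 * measure \<mu> (cball x (K * s)) + c / V (K * s)"
    if "integrable \<mu> (\<lambda>z. (p t x z)\<^sup>2)"
  proof -
    have "(\<integral>z. (p t x z)\<^sup>2 \<partial>\<mu>)
        \<le> (\<integral>z. (c / V s)\<^sup>2 * indicator (cball x (K * s)) z + c / V (K * s) * p t x z \<partial>\<mu>)"
      by (rule integral_mono[OF that rhs_integrable pointwise])
    also have "\<dots> = (c / V s)\<^sup>2 * measure \<mu> (cball x (K * s)) + c / V (K * s) * (\<integral>z. p t x z \<partial>\<mu>)"
      using emeasure_cball_finite[OF Ks(1)] p_integrable[OF t(1)]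
      by (simp add: integrable_indicator_iff sets.Int_space_eq2)
    also have "\<dots> \<le> (c / V s)\<^sup>2 * measure \<mu> (cball x (K * s)) + c / V (K * s)"
      using p_integral_le_1[OF t(1), of x] c_ge_1 V_pos[OF Ks(1)]
      by (intro add_left_mono mult_left_le) auto
    finally show ?thesis .
  qed
  ultimately have "(\<integral>z. (p t x z)\<^sup>2 \<partial>\<mu>) \<le> (c / V s)\<^sup>2 * measure \<mu> (cball x (K * s)) + c / V (K * s)"
    by (cases "integrable \<mu> (\<lambda>z. (p t x z)\<^sup>2)") (auto simp: not_integrable_integral_eq)
  then show ?thesis unfolding t_def .
qed

end

locale heat_kernel_growth =
  heat_kernel V \<phi> \<mu> p c + scale_functions_growth V \<phi> c1 c2 d1 d2 c3 c4 d3 d4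
  for V \<phi> :: "real \<Rightarrow> real" and \<mu> :: "'a::metric_space measure"
    and p :: "real \<Rightarrow> 'a \<Rightarrow> 'a \<Rightarrow> real" and c c1 c2 d1 d2 c3 c4 d3 d4 :: real +
  assumes p_sym: "\<And>t x y. 0 < t \<Longrightarrow> p t x y = p t y x"
    and p_semigroup: "\<And>s t x y. 0 < s \<Longrightarrow> 0 < t \<Longrightarrow> p (s + t) x y = (\<integral>z. p s x z * p t z y \<partial>\<mu>)"
begin

lemma p_diag_double:
  assumes "0 < t"
  shows "p (2 * t) x x = (\<integral>z. (p t x z)\<^sup>2 \<partial>\<mu>)"
proof -
  have "p (2 * t) x x = p (t + t) x x" by (simp only: mult_2)
  also have "\<dots> = (\<integral>z. p t x z * p t z x \<partial>\<mu>)"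
    by (rule p_semigroup[OF assms assms])
  also have "\<dots> = (\<integral>z. (p t x z)\<^sup>2 \<partial>\<mu>)"
    by (rule Bochner_Integration.integral_cong) (simp_all add: p_sym[OF assms, of _ x] power2_eq_square)
  finally show ?thesis .
qed

lemma integral_p_sq_ge: "\<exists>B>0. \<forall>x s. 0 < s \<longrightarrow> 1 / (B * V s) \<le> (\<integral>z. (p (\<phi> s) x z)\<^sup>2 \<partial>\<mu>)"
proof -
  obtain B where B: "1 \<le> B" "\<And>t. 0 < t \<Longrightarrow> V (inv_pos \<phi> (2 * t)) \<le> B * V (inv_pos \<phi> t)"
    using V_inv_pos_double by blast
  have "1 / (c * B * V s) \<le> (\<integral>z. (p (\<phi> s) x z)\<^sup>2 \<partial>\<mu>)" if "0 < s" for x s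
  proof -
    have t: "0 < \<phi> s" "inv_pos \<phi> (\<phi> s) = s"
      using phi_pos inv_pos_phi that by auto
    have "1 / (c * B * V s) \<le> 1 / (c * V (inv_pos \<phi> (2 * \<phi> s)))"
      using B(2)[of "\<phi> s"] t V_pos[OF that] V_pos[OF inv_pos_pos, of "2 * \<phi> s"] B(1) c_ge_1
      by (intro divide_left_mono) (auto simp: mult.assoc)
    also have "\<dots> \<le> p (2 * \<phi> s) x x"
      using p_ge_near_diag[of "2 * \<phi> s" x x] t(1) inv_pos_pos[of "2 * \<phi> s"] by simp
    also have "\<dots> = (\<integral>z. (p (\<phi> s) x z)\<^sup>2 \<partial>\<mu>)"
      using p_diag_double[OF t(1)] .
    finally show ?thesis .
  qed
  moreover have "0 < c * B" using c_ge_1 B(1) by simp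
  ultimately show ?thesis by blast
qed

lemma measure_cball_dilated_ge: "\<exists>a>0. \<exists>K\<ge>1. \<forall>x s. 0 < s \<longrightarrow> a * V s \<le> measure \<mu> (cball x (K * s))"
proof -
  obtain B where B: "0 < B" "\<And>x s. 0 < s \<Longrightarrow> 1 / (B * V s) \<le> (\<integral>z. (p (\<phi> s) x z)\<^sup>2 \<partial>\<mu>)"
    using integral_p_sq_ge by blast
  obtain K where K: "1 \<le> K" "\<And>s. 0 < s \<Longrightarrow> 2 * c * B * V s \<le> V (K * s)"
    using V_dilate_ge by blast
  have "1 / (2 * c\<^sup>2 * B) * V s \<le> measure \<mu> (cball x (K * s))" if "0 < s" for x s
  proof -
    have Vs: "0 < V s" using V_pos[OF that] .
    have "c / V (K * s) \<le> c / (2 * c * B * V s)"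
      using K(2)[OF that] c_ge_1 B(1) Vs V_pos[of "K * s"] K(1) that by (intro divide_left_mono) auto
    also have "\<dots> = 1 / (2 * B * V s)"
      using c_ge_1 by simp
    finally have far: "c / V (K * s) \<le> 1 / (2 * B * V s)" .
    have "1 / (B * V s) \<le> (c / V s)\<^sup>2 * measure \<mu> (cball x (K * s)) + c / V (K * s)"
      using B(2)[OF that, of x] integral_p_sq_le[OF that K(1), of x] by linarith
    with far have "1 / (2 * B * V s) \<le> (c / V s)\<^sup>2 * measure \<mu> (cball x (K * s))"
      by (simp add: field_simps)
    then show ?thesis
      using c_ge_1 B(1) Vs by (simp add: field_simps power2_eq_square)
  qed
  moreover have "0 < 1 / (2 * c\<^sup>2 * B)" using c_ge_1 B(1) by simp
  ultimately show ?thesis using K(1) by blast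
qed

lemma measure_cball_ge: "\<exists>a>0. \<forall>x \<rho>. 0 < \<rho> \<longrightarrow> a * V \<rho> \<le> measure \<mu> (cball x \<rho>)"
proof -
  obtain a K where a: "0 < a" and K: "1 \<le> K"
    and dilated: "\<And>x s. 0 < s \<Longrightarrow> a * V s \<le> measure \<mu> (cball x (K * s))"
    using measure_cball_dilated_ge by blast
  define M where "M = max 1 (c2 * K powr d2)"
  have "a / M * V \<rho> \<le> measure \<mu> (cball x \<rho>)" if "0 < \<rho>" for x \<rho>
  proof -
    have s: "0 < \<rho> / K" "K * (\<rho> / K) = \<rho>" using that K by auto
    have "V \<rho> \<le> M * V (\<rho> / K)"
      using V_dilate_le[OF K s(1)] s(2) unfolding M_def by simp
    then have "a / M * V \<rho> \<le> a * V (\<rho> / K)"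
      using a unfolding M_def by (simp add: field_simps)
    also have "\<dots> \<le> measure \<mu> (cball x \<rho>)"
      using dilated[OF s(1), of x] s(2) by simp
    finally show ?thesis .
  qed
  moreover have "0 < a / M" using a unfolding M_def by simp
  ultimately show ?thesis by blast
qed

lemma cball_integral_asymp:
  "\<exists>C\<ge>1. \<forall>r>0. \<forall>t>0. \<forall>x.
     min 1 (V r / V (inv_pos \<phi> t)) / C \<le> (\<integral>y\<in>cball x r. p t x y \<partial>\<mu>) \<and>
     (\<integral>y\<in>cball x r. p t x y \<partial>\<mu>) \<le> C * min 1 (V r / V (inv_pos \<phi> t))"
proof -
  obtain a where a: "0 < a" "\<And>x \<rho>. 0 < \<rho> \<Longrightarrow> a * V \<rho> \<le> measure \<mu> (cball x \<rho>)"
    using measure_cball_ge by blast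
  define C where "C = max (c\<^sup>2) (c / a)"
  have C: "1 \<le> C" "c\<^sup>2 \<le> C" "1 / C \<le> a / c"
  proof -
    show "c\<^sup>2 \<le> C" unfolding C_def by simp
    then show "1 \<le> C" using c_ge_1 one_le_power[of c 2] by linarith
    have "c / a \<le> C" "0 < c / a" using c_ge_1 a(1) unfolding C_def by auto
    then have "1 / C \<le> 1 / (c / a)" by (intro divide_left_mono mult_pos_pos) auto
    then show "1 / C \<le> a / c" by simp
  qed
  have "min 1 (V r / V (inv_pos \<phi> t)) / C \<le> (\<integral>y\<in>cball x r. p t x y \<partial>\<mu>) \<and>
     (\<integral>y\<in>cball x r. p t x y \<partial>\<mu>) \<le> C * min 1 (V r / V (inv_pos \<phi> t))"
    if "0 < r" "0 < t" for r t x
  proof -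
    have q: "0 \<le> min 1 (V r / V (inv_pos \<phi> t))"
      using V_pos[OF that(1)] V_pos[OF inv_pos_pos[OF that(2)]] by simp
    have "min 1 (V r / V (inv_pos \<phi> t)) / C \<le> a / c * min 1 (V r / V (inv_pos \<phi> t))"
      using mult_right_mono[OF C(3) q] by simp
    moreover have "c\<^sup>2 * min 1 (V r / V (inv_pos \<phi> t)) \<le> C * min 1 (V r / V (inv_pos \<phi> t))"
      using mult_right_mono[OF C(2) q] .
    moreover have "a / c * min 1 (V r / V (inv_pos \<phi> t)) \<le> (\<integral>y\<in>cball x r. p t x y \<partial>\<mu>)"
      by (rule cball_integral_ge[OF _ that]) (rule a(2))
    ultimately show ?thesis
      using cball_integral_le[OF that, of x] by linarith
  qed
  then show ?thesis using C(1) by blast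
qed

end

theorem lemma4p20:
  fixes \<mu> :: "'a::{metric_space, second_countable_topology} measure"
    and V \<phi> :: "real \<Rightarrow> real"
    and c1 c2 c3 c4 d1 d2 d3 d4 :: real
    and p :: "real \<Rightarrow> 'a \<Rightarrow> 'a \<Rightarrow> real"
    and Px :: "'a \<Rightarrow> 'w measure"
    and X :: "real \<Rightarrow> 'w \<Rightarrow> 'a option"
  assumes loc_compact: "locally compact (UNIV :: 'a set)"
    and mu_borel: "sets \<mu> = sets borel"
    and mu_radon: "\<And>K. compact K \<Longrightarrow> emeasure \<mu> K < \<infinity>"
    and mu_support: "\<And>U. open U \<Longrightarrow> U \<noteq> {} \<Longrightarrow> emeasure \<mu> U > 0"
    and consts_pos: "c1 > 0" "c2 > 0" "c3 > 0" "c4 > 0" "d1 > 0" "d2 > 0" "d3 > 0" "d4 > 0"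
    and V_pos: "\<And>r. r > 0 \<Longrightarrow> V r > 0"
    and V_mono: "mono_on {0<..} V"
    and phi_mono: "strict_mono_on {0<..} \<phi>"
    and phi_onto: "\<phi> ` {0<..} = {0<..}"
    and V_growth: "power_growth V c1 c2 d1 d2"
    and phi_growth: "power_growth \<phi> c3 c4 d3 d4"
    and Px_prob: "\<And>x. prob_space (Px x)"
    and p_meas: "\<And>t x. t > 0 \<Longrightarrow> (\<lambda>y. p t x y) \<in> borel_measurable \<mu>"
    and p_sym: "\<And>t x y. t > 0 \<Longrightarrow> p t x y = p t y x"
    and p_semigroup: "\<And>s t x y. s > 0 \<Longrightarrow> t > 0 \<Longrightarrow>
        p (s + t) x y = (\<integral>z. p s x z * p t z y \<partial>\<mu>)"
    and X_law: "\<And>x t A. t > 0 \<Longrightarrow> A \<in> sets borel \<Longrightarrow>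
        {\<omega> \<in> space (Px x). \<exists>y\<in>A. X t \<omega> = Some y} \<in> sets (Px x) \<and>
        set_integrable \<mu> A (\<lambda>y. p t x y) \<and>
        measure (Px x) {\<omega> \<in> space (Px x). \<exists>y\<in>A. X t \<omega> = Some y}
          = (\<integral>y\<in>A. p t x y \<partial>\<mu>)"
    and HK: "\<exists>c\<ge>1. \<forall>t>0. \<forall>x y.
        hk_scale V \<phi> t (dist x y) / c \<le> p t x y \<and> p t x y \<le> c * hk_scale V \<phi> t (dist x y)"
  shows "\<exists>C\<ge>1. \<forall>r>0. \<forall>t>0. \<forall>x.
     min 1 (V r / V (inv_pos \<phi> t)) / C
       \<le> measure (Px x) {\<omega> \<in> space (Px x). \<exists>y. X t \<omega> = Some y \<and> dist y x \<le> r}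
   \<and> measure (Px x) {\<omega> \<in> space (Px x). \<exists>y. X t \<omega> = Some y \<and> dist y x \<le> r}
       \<le> C * min 1 (V r / V (inv_pos \<phi> t))"
proof -
  obtain c where c: "1 \<le> c" and HKc: "\<And>t x y. 0 < t \<Longrightarrow>
      hk_scale V \<phi> t (dist x y) / c \<le> p t x y \<and> p t x y \<le> c * hk_scale V \<phi> t (dist x y)"
    using HK by blast
  have sub_markov: "integrable \<mu> (p t x) \<and> (\<integral>y. p t x y \<partial>\<mu>) \<le> 1" if "0 < t" for t x
    using X_law[OF that, of UNIV x]
      prob_space.prob_le_1[OF Px_prob, of x "{\<omega> \<in> space (Px x). \<exists>y. X t \<omega> = Some y}"]
    by (simp add: set_integrable_def set_lebesgue_integral_def)
  interpret heat_kernel_growth V \<phi> \<mu> p c c1 c2 d1 d2 c3 c4 d3 d4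
    by unfold_locales
      (fact V_pos V_mono phi_mono phi_onto mu_borel c V_growth phi_growth consts_pos p_sym p_semigroup
        | simp add: HKc sub_markov)+
  have event_law: "measure (Px x) {\<omega> \<in> space (Px x). \<exists>y. X t \<omega> = Some y \<and> dist y x \<le> r}
      = (\<integral>y\<in>cball x r. p t x y \<partial>\<mu>)" if "0 < t" for t r x
  proof -
    have "{\<omega> \<in> space (Px x). \<exists>y. X t \<omega> = Some y \<and> dist y x \<le> r}
        = {\<omega> \<in> space (Px x). \<exists>y\<in>cball x r. X t \<omega> = Some y}"
      by (auto simp: dist_commute)
    then show ?thesis using X_law[OF that, of "cball x r" x] by simp
  qed
  show ?thesis using cball_integral_asymp by (simp add: event_law)
qed

end
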